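(* For every word $C$ over the alphabet $\Sigma_D$ there exists a word $C'$ over $\Sigma_D$ in which the total number of occurrences of the symbols $CCX_{0,1}$, $CCX_{0,2}$, $CCX_{1,2}$ (the Toffoli count of $C'$) is at most $120$, and such that $[\![C]\!] = [\![C']\!]$.
   Context: Qubits are labelled $0,1,2$. The computational basis vector $|x_0x_1x_2\rangle$ ($x_i\in\{0,1\}$) is identified with the standard basis vector $e_{4x_0+2x_1+x_2}$ of $\mathbb{R}^8$, so a $2\times 2$ matrix $M$ acting on qubit $0$, $1$, $2$ is $M\otimes I\otimes I$, $I\otimes M\otimes I$, $I\otimes I\otimes M$ respectively, written $M_j$. Let $X=\begin{bmatrix}0&1\\1&0\end{bmatrix}$, $Z=\begin{bmatrix}1&0\\0&-1\end{bmatrix}$, $H=\frac{1}{\sqrt2}\begin{bmatrix}1&1\\1&-1\end{bmatrix}$. For $j\neq k$, $CX_{j,k}$ (resp. $CZ_{j,k}$) is the $8\times 8$ matrix sending $|x_0x_1x_2\rangle$ to $(X_k)^{x_j}|x_0x_1x_2\rangle$ (resp. $(Z_k)^{x_j}|x_0x_1x_2\rangle$). For $j<k$, $CCX_{j,k}$ sends $|x_0x_1x_2\rangle$ to $(X_l)^{x_jx_k}|x_0x_1x_2\rangle$ where $l$ is the element of $\{0,1,2\}\setminus\{j,k\}$. $K_{j,k}=H_jH_k$, and $\sigma_{j,k}$ is the permutation matrix swapping qubits $j$ and $k$. The alphabet $\Sigma_D$ consists of the $23$ symbols $X_0,X_1,X_2$; $CX_{k,l}$ for all $k\neq l$ in $\{0,1,2\}$;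 $CCX_{0,1},CCX_{0,2},CCX_{1,2}$; $Z_0,Z_1,Z_2$; $CZ_{0,1},CZ_{0,2},CZ_{1,2}$; $K_{0,1},K_{1,2}$; $\sigma_{0,1},\sigma_{0,2},\sigma_{1,2}$, each interpreted as the corresponding $8\times 8$ matrix. A word $w_1w_2\cdots w_m$ over $\Sigma_D$ is interpreted as the matrix product $[\![w_1w_2\cdots w_m]\!]=[\![w_1]\!][\![w_2]\!]\cdots[\![w_m]\!]$ (the empty word gives the identity). *)

theory Defs
  imports "Jordan_Normal_Form.Matrix"
begin

text \<open>Basis index x in {0..<8} encodes |x0 x1 x2> with x = 4 x0 + 2 x1 + x2.
  Matrices are 8 x 8 real matrices (Jordan_Normal_Form mat).\<close>

definition qbit :: "nat \<Rightarrow> nat \<Rightarrow> nat" where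
  "qbit x j = (x div 2 ^ (2 - j)) mod 2"

definition qflip :: "nat \<Rightarrow> nat \<Rightarrow> nat" where
  "qflip x j = (if qbit x j = 1 then x - 2 ^ (2 - j) else x + 2 ^ (2 - j))"

definition perm_mat :: "(nat \<Rightarrow> nat) \<Rightarrow> real mat" where
  "perm_mat f = mat 8 8 (\<lambda>(i, x). if i = f x then 1 else 0)"

definition diag_sign :: "(nat \<Rightarrow> bool) \<Rightarrow> real mat" where
  "diag_sign P = mat 8 8 (\<lambda>(i, x). if i = x then (if P x then -1 else 1) else 0)"

definition X_mat :: "nat \<Rightarrow> real mat" where
  "X_mat j = perm_mat (\<lambda>x. qflip x j)"

definition Z_mat :: "nat \<Rightarrow> real mat" where
  "Z_mat j = diag_sign (\<lambda>x. qbit x j = 1)"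

definition CX_mat :: "nat \<Rightarrow> nat \<Rightarrow> real mat" where
  "CX_mat j k = perm_mat (\<lambda>x. if qbit x j = 1 then qflip x k else x)"

definition CZ_mat :: "nat \<Rightarrow> nat \<Rightarrow> real mat" where
  "CZ_mat j k = diag_sign (\<lambda>x. qbit x j = 1 \<and> qbit x k = 1)"

definition CCX_mat :: "nat \<Rightarrow> nat \<Rightarrow> real mat" where
  "CCX_mat j k = perm_mat (\<lambda>x. if qbit x j = 1 \<and> qbit x k = 1 then qflip x (3 - j - k) else x)"

text \<open>Hadamard on qubit j: H tensored with identities.\<close>
definition H_mat :: "nat \<Rightarrow> real mat" where
  "H_mat j = mat 8 8 (\<lambda>(i, x).
     if (\<forall>m<3. m \<noteq> j \<longrightarrow> qbit i m = qbit x m)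
     then (if qbit i j = 1 \<and> qbit x j = 1 then - 1 / sqrt 2 else 1 / sqrt 2)
     else 0)"

definition K_mat :: "nat \<Rightarrow> nat \<Rightarrow> real mat" where
  "K_mat j k = H_mat j * H_mat k"

definition swap_mat :: "nat \<Rightarrow> nat \<Rightarrow> real mat" where
  "swap_mat j k = perm_mat (\<lambda>x. if qbit x j = qbit x k then x else qflip (qflip x j) k)"

datatype gate = Xg nat | CXg nat nat | CCXg nat nat | Zg nat | CZg nat nat
  | Kg nat nat | Sg nat nat

definition Sigma_D :: "gate set" where
  "Sigma_D = {Xg 0, Xg 1, Xg 2,
     CXg 0 1, CXg 0 2, CXg 1 0, CXg 1 2, CXg 2 0, CXg 2 1,
     CCXg 0 1, CCXg 0 2, CCXg 1 2,
     Zg 0, Zg 1, Zg 2,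
     CZg 0 1, CZg 0 2, CZg 1 2,
     Kg 0 1, Kg 1 2,
     Sg 0 1, Sg 0 2, Sg 1 2}"

fun gate_sem :: "gate \<Rightarrow> real mat" where
  "gate_sem (Xg j) = X_mat j"
| "gate_sem (CXg j k) = CX_mat j k"
| "gate_sem (CCXg j k) = CCX_mat j k"
| "gate_sem (Zg j) = Z_mat j"
| "gate_sem (CZg j k) = CZ_mat j k"
| "gate_sem (Kg j k) = K_mat j k"
| "gate_sem (Sg j k) = swap_mat j k"

definition word_sem :: "gate list \<Rightarrow> real mat" where
  "word_sem w = foldr (\<lambda>g M. gate_sem g * M) w (1\<^sub>m 8)"

fun is_toffoli :: "gate \<Rightarrow> bool" where
  "is_toffoli (CCXg _ _) = True"
| "is_toffoli _ = False"

definition toffoli_count :: "gate list \<Rightarrow> nat" where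
  "toffoli_count w = length (filter is_toffoli w)"

end

theory Submission
  imports Defs
begin

text \<open>
  The symbols without Toffoli gates generate a subgroup \<open>H\<close> of the group generated by
  \<open>\<Sigma>\<^sub>D\<close>, and 270 cosets \<open>r H\<close> cover that group, where each representative \<open>r\<close>
  is a word with at most four Toffoli gates. This is certified by a coset table: for every
  representative \<open>r\<close> and every \<open>s\<close> among the generators \<open>CCX\<^sub>0\<^sub>1, K\<^sub>0\<^sub>1, CX\<^sub>0\<^sub>1, \<sigma>\<^sub>1\<^sub>2\<close>,
  it names a representative \<open>r'\<close> and a Toffoli-free word \<open>h\<close> with \<open>s r = r' h\<close>; the other
  symbols are words in these generators. Induction on the circuit then writes it as \<open>r h\<close>.
  Every identity used is checked exactly, by running both sides on the standard basis with
  integer arithmetic.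
\<close>

section \<open>Covering words by finitely many cosets\<close>

lemma words_covered_by_coset_table:
  fixes sem :: "'a list \<Rightarrow> 'b"
  assumes cong: "\<And>u v x y. sem u = sem v \<Longrightarrow> sem (x @ u @ y) = sem (x @ v @ y)"
    and letters: "\<And>a. \<exists>u \<in> lists G. sem [a] = sem u"
    and "r\<^sub>0 \<in> R" "sem r\<^sub>0 = sem []"
    and table: "\<And>s r. s \<in> G \<Longrightarrow> r \<in> R \<Longrightarrow> \<exists>r' \<in> R. \<exists>h \<in> lists H. sem (s # r) = sem (r' @ h)"
  shows "\<exists>r \<in> R. \<exists>h \<in> lists H. sem w = sem (r @ h)"
proof -
  let ?covered = "\<lambda>w. \<exists>r \<in> R. \<exists>h \<in> lists H. sem w = sem (r @ h)"
  have generator_step: "?covered (s # w)" if "s \<in> G" "?covered w" for s w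
  proof -
    from that(2) obtain r h where "r \<in> R" "h \<in> lists H" and w: "sem w = sem (r @ h)"
      by blast
    with table[OF \<open>s \<in> G\<close>] obtain r' h' where "r' \<in> R" "h' \<in> lists H"
      and sr: "sem (s # r) = sem (r' @ h')"
      by blast
    have "sem (s # w) = sem ([] @ (s # r) @ h)"
      using cong[OF w, of "[s]" "[]"] by simp
    also have "\<dots> = sem (r' @ h' @ h)"
      using cong[OF sr, of "[]" h] by simp
    finally show ?thesis
      using \<open>r' \<in> R\<close> \<open>h' \<in> lists H\<close> \<open>h \<in> lists H\<close>
      by (intro bexI[of _ r'] bexI[of _ "h' @ h"]) auto
  qed
  have generator_word: "?covered (u @ w)" if "u \<in> lists G" "?covered w" for u w
    using that by (induction u) (auto intro: generator_step)
  show ?thesis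
  proof (induction w)
    case Nil
    then show ?case
      using assms(3,4) by (intro bexI[of _ r\<^sub>0] bexI[of _ "[]"]) auto
  next
    case (Cons a w)
    obtain u where "u \<in> lists G" "sem [a] = sem u"
      using letters by blast
    then have "sem (a # w) = sem (u @ w)"
      using cong[of "[a]" u "[]" w] by simp
    with generator_word[OF \<open>u \<in> lists G\<close> Cons.IH] show ?case
      by simp
  qed
qed

section \<open>Circuits over \<open>\<Sigma>\<^sub>D\<close>\<close>

lemma H_mat_carrier: "H_mat j \<in> carrier_mat 8 8"
  by (simp add: H_mat_def)

lemma gate_sem_carrier: "gate_sem g \<in> carrier_mat 8 8"
  by (cases g) (simp_all add: X_mat_def Z_mat_def CX_mat_def CZ_mat_def CCX_mat_def K_mat_def
      swap_mat_def perm_mat_def diag_sign_def mult_carrier_mat[OF H_mat_carrier H_mat_carrier])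

lemma word_sem_Nil: "word_sem [] = 1\<^sub>m 8"
  by (simp add: word_sem_def)

lemma word_sem_Cons: "word_sem (g # w) = gate_sem g * word_sem w"
  by (simp add: word_sem_def)

lemma word_sem_carrier: "word_sem w \<in> carrier_mat 8 8"
  by (induction w) (simp_all add: word_sem_Nil word_sem_Cons mult_carrier_mat[OF gate_sem_carrier])

lemma word_sem_append: "word_sem (u @ v) = word_sem u * word_sem v"
proof (induction u)
  case Nil
  show ?case
    using word_sem_carrier[of v] by (simp add: word_sem_Nil)
next
  case (Cons g u)
  then show ?case
    by (simp add: word_sem_Cons assoc_mult_mat[OF gate_sem_carrier word_sem_carrier word_sem_carrier])
qed

lemma toffoli_count_append: "toffoli_count (u @ v) = toffoli_count u + toffoli_count v"
  by (simp add: toffoli_count_def)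

lemma toffoli_count_eq_0_iff: "toffoli_count w = 0 \<longleftrightarrow> (\<forall>g \<in> set w. \<not> is_toffoli g)"
  by (simp add: toffoli_count_def filter_empty_conv)

text \<open>\<open>\<Sigma>\<^sub>D\<close> as an enumeration type, so that the certificate below can be checked by evaluation.\<close>

datatype letter = X0 | X1 | X2 | CX01 | CX02 | CX10 | CX12 | CX20 | CX21 | CCX01 | CCX02 | CCX12
  | Z0 | Z1 | Z2 | CZ01 | CZ02 | CZ12 | K01 | K12 | S01 | S02 | S12

fun gate_of :: "letter \<Rightarrow> gate" where
  "gate_of X0 = Xg 0"
| "gate_of X1 = Xg 1"
| "gate_of X2 = Xg 2"
| "gate_of CX01 = CXg 0 1"
| "gate_of CX02 = CXg 0 2"
| "gate_of CX10 = CXg 1 0"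
| "gate_of CX12 = CXg 1 2"
| "gate_of CX20 = CXg 2 0"
| "gate_of CX21 = CXg 2 1"
| "gate_of CCX01 = CCXg 0 1"
| "gate_of CCX02 = CCXg 0 2"
| "gate_of CCX12 = CCXg 1 2"
| "gate_of Z0 = Zg 0"
| "gate_of Z1 = Zg 1"
| "gate_of Z2 = Zg 2"
| "gate_of CZ01 = CZg 0 1"
| "gate_of CZ02 = CZg 0 2"
| "gate_of CZ12 = CZg 1 2"
| "gate_of K01 = Kg 0 1"
| "gate_of K12 = Kg 1 2"
| "gate_of S01 = Sg 0 1"
| "gate_of S02 = Sg 0 2"
| "gate_of S12 = Sg 1 2"

lemma gate_of_in_Sigma_D: "gate_of c \<in> Sigma_D"
  by (cases c) (simp_all add: Sigma_D_def)

lemma range_gate_of: "range gate_of = Sigma_D"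
proof
  show "range gate_of \<subseteq> Sigma_D"
    using gate_of_in_Sigma_D by blast
  have "Sigma_D = gate_of ` {X0, X1, X2, CX01, CX02, CX10, CX12, CX20, CX21, CCX01, CCX02, CCX12,
      Z0, Z1, Z2, CZ01, CZ02, CZ12, K01, K12, S01, S02, S12}"
    by (simp add: Sigma_D_def)
  then show "Sigma_D \<subseteq> range gate_of"
    by blast
qed

section \<open>Gate matrices acting on vectors\<close>

lemma less_3_cases:
  assumes "(j::nat) < 3"
  obtains "j = 0" | "j = 1" | "j = 2"
  using assms by fastforce

lemma less_8_cases:
  assumes "(i::nat) < 8"
  obtains "i = 0" | "i = 1" | "i = 2" | "i = 3" | "i = 4" | "i = 5" | "i = 6" | "i = 7"
  using assms by fastforce

lemma sum_lessThan_8: "(\<Sum>x<8. f x) = f 0 + f 1 + f 2 + f 3 + f 4 + f 5 + f 6 + f (7::nat)"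
  by (simp add: eval_nat_numeral)

lemma all_less_3_neq:
  "(\<forall>m<3. m \<noteq> j \<longrightarrow> P m) \<longleftrightarrow> (j \<noteq> 0 \<longrightarrow> P 0) \<and> (j \<noteq> 1 \<longrightarrow> P 1) \<and> (j \<noteq> (2::nat) \<longrightarrow> P 2)"
  by (auto simp: less_Suc_eq numeral_eq_Suc)

text \<open>The simplifier rewrites \<open>1::nat\<close> to \<open>Suc 0\<close>, while case splits produce the numeral:
  both forms are needed.\<close>

lemma qbit_0 [simp]: "qbit x 0 = x div 4 mod 2"
  and qbit_1 [simp]: "qbit x 1 = x div 2 mod 2"
  and qbit_Suc_0 [simp]: "qbit x (Suc 0) = x div 2 mod 2"
  and qbit_2 [simp]: "qbit x 2 = x mod 2"
  by (simp_all add: qbit_def)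

lemma qflip_0 [simp]: "qflip x 0 = (if x div 4 mod 2 = 1 then x - 4 else x + 4)"
  and qflip_1 [simp]: "qflip x 1 = (if x div 2 mod 2 = 1 then x - 2 else x + 2)"
  and qflip_Suc_0 [simp]: "qflip x (Suc 0) = (if x div 2 mod 2 = 1 then x - 2 else x + 2)"
  and qflip_2 [simp]: "qflip x 2 = (if x mod 2 = 1 then x - 1 else x + 1)"
  by (simp_all add: qflip_def qbit_def)

lemma qflip_less_8: "j < 3 \<Longrightarrow> i < 8 \<Longrightarrow> qflip i j < 8"
  by (elim less_3_cases less_8_cases) (simp_all del: One_nat_def)

definition hadamard_comb :: "nat \<Rightarrow> (nat \<Rightarrow> real) \<Rightarrow> nat \<Rightarrow> real" where
  "hadamard_comb j f i = (if qbit i j = 0 then f i + f (qflip i j) else f (qflip i j) - f i)"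

lemma H_mat_mult_vec_nth:
  assumes "j < 3" "v \<in> carrier_vec 8" "i < 8"
  shows "(H_mat j *\<^sub>v v) $ i = hadamard_comb j (($) v) i / sqrt 2"
proof -
  have "(H_mat j *\<^sub>v v) $ i = (\<Sum>x<8. (if \<forall>m<3. m \<noteq> j \<longrightarrow> qbit i m = qbit x m
     then (if qbit i j = 1 \<and> qbit x j = 1 then - 1 / sqrt 2 else 1 / sqrt 2) else 0) * v $ x)"
    using assms(2,3) by (simp add: H_mat_def scalar_prod_def atLeast0LessThan mult.commute)
  also from \<open>j < 3\<close> \<open>i < 8\<close> have "\<dots> = hadamard_comb j (($) v) i / sqrt 2"
    unfolding sum_lessThan_8 all_less_3_neq hadamard_comb_def
    by (elim less_3_cases less_8_cases; simp add: add_divide_distrib diff_divide_distrib del: One_nat_def;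
        simp add: numeral_2_eq_2)
  finally show ?thesis .
qed

lemma K_mat_mult_vec_nth:
  assumes "j < 3" "k < 3" "v \<in> carrier_vec 8" "i < 8"
  shows "(K_mat j k *\<^sub>v v) $ i = hadamard_comb j (hadamard_comb k (($) v)) i / 2"
proof -
  let ?w = "H_mat k *\<^sub>v v"
  have w: "?w $ x = hadamard_comb k (($) v) x / sqrt 2" if "x \<in> {i, qflip i j}" for x
    using that assms H_mat_mult_vec_nth[OF \<open>k < 3\<close> \<open>v \<in> carrier_vec 8\<close>] qflip_less_8 by auto
  have "(K_mat j k *\<^sub>v v) $ i = (H_mat j *\<^sub>v ?w) $ i"
    by (simp add: K_mat_def assoc_mult_mat_vec[OF H_mat_carrier H_mat_carrier assms(3)])
  also have "\<dots> = hadamard_comb j (($) ?w) i / sqrt 2"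
    using assms by (intro H_mat_mult_vec_nth mult_mat_vec_carrier[OF H_mat_carrier])
  also have "\<dots> = hadamard_comb j (hadamard_comb k (($) v)) i / (sqrt 2 * sqrt 2)"
    using w by (simp add: hadamard_comb_def add_divide_distrib diff_divide_distrib)
  finally show ?thesis
    by simp
qed

lemma mat_mult_vec_nth_8:
  "v \<in> carrier_vec 8 \<Longrightarrow> i < 8 \<Longrightarrow> (mat 8 8 F *\<^sub>v v) $ i = (\<Sum>x<8. F (i, x) * v $ x)"
  by (simp add: scalar_prod_def atLeast0LessThan)

section \<open>Exact simulation on integer vectors\<close>

text \<open>Coordinates are integers in units of \<open>1/4\<close>. The simulation starts from the vectors
  \<open>4 e\<^sub>i\<close>; each \<open>K\<close> halves, and \<open>halve\<close> returns \<open>None\<close> rather than leave the integers,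
  which can only make a check fail.\<close>

definition scaled_vec :: "int list \<Rightarrow> real vec" where
  "scaled_vec xs = vec 8 (\<lambda>i. of_int (xs ! i) / 4)"

definition halve :: "int list \<Rightarrow> int list option" where
  "halve xs = (if list_all even xs then Some (map (\<lambda>x. x div 2) xs) else None)"

fun int_act8 :: "letter \<Rightarrow> int \<Rightarrow> int \<Rightarrow> int \<Rightarrow> int \<Rightarrow> int \<Rightarrow> int \<Rightarrow> int \<Rightarrow> int \<Rightarrow> int list option" where
  "int_act8 X0 a0 a1 a2 a3 a4 a5 a6 a7 = Some [a4, a5, a6, a7, a0, a1, a2, a3]"
| "int_act8 X1 a0 a1 a2 a3 a4 a5 a6 a7 = Some [a2, a3, a0, a1, a6, a7, a4, a5]"
| "int_act8 X2 a0 a1 a2 a3 a4 a5 a6 a7 = Some [a1, a0, a3, a2, a5, a4, a7, a6]"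
| "int_act8 CX01 a0 a1 a2 a3 a4 a5 a6 a7 = Some [a0, a1, a2, a3, a6, a7, a4, a5]"
| "int_act8 CX02 a0 a1 a2 a3 a4 a5 a6 a7 = Some [a0, a1, a2, a3, a5, a4, a7, a6]"
| "int_act8 CX10 a0 a1 a2 a3 a4 a5 a6 a7 = Some [a0, a1, a6, a7, a4, a5, a2, a3]"
| "int_act8 CX12 a0 a1 a2 a3 a4 a5 a6 a7 = Some [a0, a1, a3, a2, a4, a5, a7, a6]"
| "int_act8 CX20 a0 a1 a2 a3 a4 a5 a6 a7 = Some [a0, a5, a2, a7, a4, a1, a6, a3]"
| "int_act8 CX21 a0 a1 a2 a3 a4 a5 a6 a7 = Some [a0, a3, a2, a1, a4, a7, a6, a5]"
| "int_act8 CCX01 a0 a1 a2 a3 a4 a5 a6 a7 = Some [a0, a1, a2, a3, a4, a5, a7, a6]"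
| "int_act8 CCX02 a0 a1 a2 a3 a4 a5 a6 a7 = Some [a0, a1, a2, a3, a4, a7, a6, a5]"
| "int_act8 CCX12 a0 a1 a2 a3 a4 a5 a6 a7 = Some [a0, a1, a2, a7, a4, a5, a6, a3]"
| "int_act8 Z0 a0 a1 a2 a3 a4 a5 a6 a7 = Some [a0, a1, a2, a3, - a4, - a5, - a6, - a7]"
| "int_act8 Z1 a0 a1 a2 a3 a4 a5 a6 a7 = Some [a0, a1, - a2, - a3, a4, a5, - a6, - a7]"
| "int_act8 Z2 a0 a1 a2 a3 a4 a5 a6 a7 = Some [a0, - a1, a2, - a3, a4, - a5, a6, - a7]"
| "int_act8 CZ01 a0 a1 a2 a3 a4 a5 a6 a7 = Some [a0, a1, a2, a3, a4, a5, - a6, - a7]"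
| "int_act8 CZ02 a0 a1 a2 a3 a4 a5 a6 a7 = Some [a0, a1, a2, a3, a4, - a5, a6, - a7]"
| "int_act8 CZ12 a0 a1 a2 a3 a4 a5 a6 a7 = Some [a0, a1, a2, - a3, a4, a5, a6, - a7]"
| "int_act8 K01 a0 a1 a2 a3 a4 a5 a6 a7 = halve
    [a0 + a2 + a4 + a6, a1 + a3 + a5 + a7, a0 - a2 + a4 - a6, a1 - a3 + a5 - a7,
     a0 + a2 - a4 - a6, a1 + a3 - a5 - a7, a0 - a2 - a4 + a6, a1 - a3 - a5 + a7]"
| "int_act8 K12 a0 a1 a2 a3 a4 a5 a6 a7 = halve
    [a0 + a1 + a2 + a3, a0 - a1 + a2 - a3, a0 + a1 - a2 - a3, a0 - a1 - a2 + a3,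
     a4 + a5 + a6 + a7, a4 - a5 + a6 - a7, a4 + a5 - a6 - a7, a4 - a5 - a6 + a7]"
| "int_act8 S01 a0 a1 a2 a3 a4 a5 a6 a7 = Some [a0, a1, a4, a5, a2, a3, a6, a7]"
| "int_act8 S02 a0 a1 a2 a3 a4 a5 a6 a7 = Some [a0, a4, a2, a6, a1, a5, a3, a7]"
| "int_act8 S12 a0 a1 a2 a3 a4 a5 a6 a7 = Some [a0, a2, a1, a3, a4, a6, a5, a7]"

fun int_act :: "letter \<Rightarrow> int list \<Rightarrow> int list option" where
  "int_act c [a0, a1, a2, a3, a4, a5, a6, a7] = int_act8 c a0 a1 a2 a3 a4 a5 a6 a7"
| "int_act c _ = None"

fun int_word_act :: "letter list \<Rightarrow> int list \<Rightarrow> int list option" where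
  "int_word_act [] xs = Some xs"
| "int_word_act (c # w) xs = Option.bind (int_word_act w xs) (int_act c)"


lemma scaled_vec_carrier: "scaled_vec xs \<in> carrier_vec 8"
  by (simp add: scaled_vec_def)

lemma int_act_Some_length:
  assumes "int_act c xs = Some ys"
  obtains a0 a1 a2 a3 a4 a5 a6 a7 where "xs = [a0, a1, a2, a3, a4, a5, a6, a7]"
  using assms by (cases "(c, xs)" rule: int_act.cases) auto

lemma halve_Some_nth:
  assumes "halve xs = Some ys" "i < length xs"
  shows "real_of_int (ys ! i) = real_of_int (xs ! i) / 2"
proof -
  from assms have "even (xs ! i)" "ys = map (\<lambda>x. x div 2) xs"
    by (auto simp: halve_def list_all_length split: if_splits)
  with assms(2) show ?thesis
    by (auto elim!: evenE)
qed

lemma int_act_sound_K: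
  assumes "int_act c xs = Some ys" "c \<in> {K01, K12}" "i < 8"
  shows "(gate_sem (gate_of c) *\<^sub>v scaled_vec xs) $ i = scaled_vec ys $ i"
proof -
  obtain a0 a1 a2 a3 a4 a5 a6 a7 where xs: "xs = [a0, a1, a2, a3, a4, a5, a6, a7]"
    using assms(1) by (rule int_act_Some_length)
  from assms(2) obtain j k where c: "gate_of c = Kg j k" "j < 3" "k < 3"
    by auto
  have "(gate_sem (gate_of c) *\<^sub>v scaled_vec xs) $ i
      = hadamard_comb j (hadamard_comb k (($) (scaled_vec xs))) i / 2"
    using c \<open>i < 8\<close> by (simp add: K_mat_mult_vec_nth scaled_vec_carrier)
  also from assms c have "\<dots> = scaled_vec ys $ i"
    by (auto simp: xs halve_Some_nth hadamard_comb_def scaled_vec_def field_simps simp del: One_nat_def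
        elim!: less_8_cases)
  finally show ?thesis .
qed

lemma int_act_sound_not_K:
  assumes "int_act c xs = Some ys" "c \<notin> {K01, K12}" "i < 8"
  shows "(gate_sem (gate_of c) *\<^sub>v scaled_vec xs) $ i = scaled_vec ys $ i"
proof -
  obtain a0 a1 a2 a3 a4 a5 a6 a7 where xs: "xs = [a0, a1, a2, a3, a4, a5, a6, a7]"
    using assms(1) by (rule int_act_Some_length)
  have entry: "(mat 8 8 F *\<^sub>v scaled_vec xs) $ i = (\<Sum>x<8. F (i, x) * scaled_vec xs $ x)" for F
    by (rule mat_mult_vec_nth_8[OF scaled_vec_carrier \<open>i < 8\<close>])
  from assms(2,3) assms(1)[symmetric] show ?thesis
    by (cases c; simp only: gate_of.simps gate_sem.simps X_mat_def Z_mat_def CX_mat_def CZ_mat_def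
          CCX_mat_def swap_mat_def perm_mat_def diag_sign_def entry;
        elim less_8_cases; simp add: xs sum_lessThan_8 scaled_vec_def del: One_nat_def)
qed

lemma int_act_sound:
  assumes "int_act c xs = Some ys"
  shows "gate_sem (gate_of c) *\<^sub>v scaled_vec xs = scaled_vec ys"
proof (rule eq_vecI)
  fix i assume "i < dim_vec (scaled_vec ys)"
  then have "i < 8"
    by (simp add: scaled_vec_def)
  with assms show "(gate_sem (gate_of c) *\<^sub>v scaled_vec xs) $ i = scaled_vec ys $ i"
    by (cases "c \<in> {K01, K12}") (simp_all add: int_act_sound_K int_act_sound_not_K)
qed (simp add: scaled_vec_def carrier_matD[OF gate_sem_carrier])

lemma int_word_act_sound:
  assumes "int_word_act w xs = Some ys"
  shows "word_sem (map gate_of w) *\<^sub>v scaled_vec xs = scaled_vec ys"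
  using assms
proof (induction w arbitrary: ys)
  case Nil
  then show ?case
    by (simp add: word_sem_Nil scaled_vec_carrier)
next
  case (Cons c w)
  then obtain zs where "int_word_act w xs = Some zs" "int_act c zs = Some ys"
    by (auto split: Option.bind_splits)
  with Cons.IH show ?case
    by (simp add: word_sem_Cons int_act_sound
        assoc_mult_mat_vec[OF gate_sem_carrier word_sem_carrier scaled_vec_carrier])
qed

definition scaled_basis :: "int list list" where
  "scaled_basis = map (\<lambda>i. map (\<lambda>j. if i = j then 4 else 0) [0..<8]) [0..<8]"

lemma scaled_vec_scaled_basis: "i < 8 \<Longrightarrow> scaled_vec (scaled_basis ! i) = unit_vec 8 i"
  by (auto simp: scaled_vec_def scaled_basis_def unit_vec_def)

lemma eq_mat_by_unit_vecs:
  fixes A B :: "'a::semiring_1 mat"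
  assumes "A \<in> carrier_mat n m" "B \<in> carrier_mat n m"
    and "\<And>j. j < m \<Longrightarrow> A *\<^sub>v unit_vec m j = B *\<^sub>v unit_vec m j"
  shows "A = B"
proof (rule eq_matI)
  fix i j assume "i < dim_row B" "j < dim_col B"
  with assms(1,2) have "A $$ (i, j) = (A *\<^sub>v unit_vec m j) $ i"
    and "B $$ (i, j) = (B *\<^sub>v unit_vec m j) $ i"
    by auto
  with assms(2,3) \<open>j < dim_col B\<close> show "A $$ (i, j) = B $$ (i, j)"
    by auto
qed (use assms(1,2) in auto)

definition same_action :: "letter list \<Rightarrow> letter list \<Rightarrow> bool" where
  "same_action u v \<longleftrightarrow>
    list_all (\<lambda>e. int_word_act u e \<noteq> None \<and> int_word_act u e = int_word_act v e) scaled_basis"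

lemma same_action_sound:
  assumes "same_action u v"
  shows "word_sem (map gate_of u) = word_sem (map gate_of v)"
proof (rule eq_mat_by_unit_vecs[OF word_sem_carrier word_sem_carrier])
  fix i :: nat assume "i < 8"
  then have "scaled_basis ! i \<in> set scaled_basis"
    by (intro nth_mem) (simp add: scaled_basis_def)
  with assms obtain ys where "int_word_act u (scaled_basis ! i) = Some ys"
    and "int_word_act v (scaled_basis ! i) = Some ys"
    by (fastforce simp: same_action_def list_all_iff)
  with \<open>i < 8\<close> show "word_sem (map gate_of u) *\<^sub>v unit_vec 8 i = word_sem (map gate_of v) *\<^sub>v unit_vec 8 i"
    by (simp add: int_word_act_sound flip: scaled_vec_scaled_basis)
qed

section \<open>The coset table\<close>

definition generators :: "letter list" where
  "generators = [CCX01, K01, CX01, S12]"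

definition generator_words :: "(letter \<times> letter list) list" where
  "generator_words = [
    (CX02, [S12, CX01, S12]),
    (CX10, [K01, CX01, K01]),
    (K12, [S12, K01, S12, K01]),
    (CX20, [S12, K01, CX01, K01, S12]),
    (S01, [CX01, K01, CX01, K01, CX01]),
    (CZ02, [K01, S12, K01, CX01, K01, S12, K01]),
    (S02, [S12, CX01, K01, CX01, K01, CX01, S12]),
    (CZ01, [S12, K01, S12, K01, CX01, S12, K01, S12, K01]),
    (CX12, [CX01, K01, CX01, K01, S12, CX01, S12, K01, CX01, K01, CX01]),
    (CZ12, [CX01, K01, CX01, S12, K01, CX01, K01, S12, CX01, K01, CX01]),
    (CX21, [S12, K01, CX01, K01, S12, CX01, S12, K01, CX01, K01, S12, CX01]),
    (X1, [S12, K01, S12, CX01, S12, K01, S12, CX01, S12, K01, S12, CX01, S12, K01, S12, CX01]),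
    (X2, [S12, CX01, S12, K01, S12, CX01, S12, K01, S12, CX01, S12, K01, S12, CX01, S12, K01]),
    (Z1, [S12, K01, S12, K01, CX01, S12, K01, S12, CX01, S12, K01, S12, CX01, S12, K01, S12, CX01, K01]),
    (Z2, [S12, K01, CX01, S12, K01, S12, CX01, S12, K01, S12, CX01, S12, K01, S12, CX01, K01, S12, K01]),
    (X0, [S12, K01, S12, CX01, S12, K01, S12, K01, CX01, S12, K01, S12, K01, CX01, S12, K01, S12, K01, CX01, K01]),
    (Z0, [S12, CX01, S12, K01, S12, K01, CX01, S12, K01, S12, K01, CX01, S12, K01, S12, K01, CX01, K01, S12, K01]),
    (CCX02, [S12, CCX01, S12]),
    (CCX12, [S12, CX01, K01, CX01, K01, CX01, S12, CCX01, S12, CX01, K01, CX01, K01, CX01, S12])]"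

definition coset_reps :: "letter list list" where
  "coset_reps = [
    [],
    [CCX01],
    [CCX02],
    [CCX12],
    [CX20, CCX01],
    [CX21, CCX01],
    [CCX02, CCX01],
    [CCX12, CCX01],
    [K01, CCX01],
    [CX10, CCX02],
    [CCX01, CCX02],
    [CCX12, CCX02],
    [CCX01, CCX12],
    [CCX02, CCX12],
    [CX01, CX20, CCX01],
    [CCX02, CX20, CCX01],
    [K01, CX20, CCX01],
    [CCX12, CX21, CCX01],
    [K01, CX21, CCX01],
    [CCX01, K01, CCX01],
    [CZ01, K01, CCX01],
    [CCX02, K01, CCX01],
    [CCX12, K01, CCX01],
    [CCX01, CX10, CCX02],
    [CCX01, CX01, CX20, CCX01],
    [CCX02, CX01, CX20, CCX01],
    [CCX12, CX01, CX20, CCX01],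
    [K01, CX01, CX20, CCX01],
    [K12, CX01, CX20, CCX01],
    [CCX01, K01, CX20, CCX01],
    [CCX02, K01, CX20, CCX01],
    [CCX12, K01, CX20, CCX01],
    [CX02, K01, CX21, CCX01],
    [CCX01, K01, CX21, CCX01],
    [CCX02, K01, CX21, CCX01],
    [CCX12, K01, CX21, CCX01],
    [CCX01, CZ01, K01, CCX01],
    [CCX02, CZ01, K01, CCX01],
    [CCX12, CZ01, K01, CCX01],
    [CX02, K01, CX01, CX20, CCX01],
    [CCX01, K01, CX01, CX20, CCX01],
    [CCX02, K01, CX01, CX20, CCX01],
    [CCX12, K01, CX01, CX20, CCX01],
    [CCX01, K12, CX01, CX20, CCX01],
    [CCX02, K12, CX01, CX20, CCX01],
    [CCX12, K12, CX01, CX20, CCX01],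
    [CCX01, CX02, K01, CX21, CCX01],
    [CCX02, CX02, K01, CX21, CCX01],
    [CCX12, CX02, K01, CX21, CCX01],
    [CCX01, CX02, K01, CX01, CX20, CCX01],
    [CCX02, CX02, K01, CX01, CX20, CCX01],
    [CCX12, CX02, K01, CX01, CX20, CCX01],
    [CCX12, CCX02, CCX01],
    [CCX02, CCX12, CCX01],
    [CCX12, CCX01, CCX02],
    [CCX01, CCX12, CCX02],
    [CCX02, CCX01, CCX12],
    [CCX01, CCX02, CCX12],
    [CX10, CCX02, CX20, CCX01],
    [CX12, CCX02, CX20, CCX01],
    [K12, CCX12, CX21, CCX01],
    [CX20, CCX01, K01, CCX01],
    [CCX02, CCX01, K01, CCX01],
    [CCX12, CCX01, K01, CCX01],
    [CX10, CCX02, K01, CCX01],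
    [CCX01, CCX02, K01, CCX01],
    [CCX12, CCX02, K01, CCX01],
    [CCX01, CCX12, K01, CCX01],
    [CCX02, CCX12, K01, CCX01],
    [CCX02, CCX01, CX01, CX20, CCX01],
    [CCX12, CCX01, CX01, CX20, CCX01],
    [K01, CCX01, CX01, CX20, CCX01],
    [K12, CCX12, CX01, CX20, CCX01],
    [CX20, CCX01, K01, CX20, CCX01],
    [CX21, CCX01, K01, CX20, CCX01],
    [CCX02, CCX01, K01, CX20, CCX01],
    [CCX12, CCX01, K01, CX20, CCX01],
    [CCX01, CCX02, K01, CX20, CCX01],
    [CCX12, CCX02, K01, CX20, CCX01],
    [CX01, CCX12, K01, CX20, CCX01],
    [CCX01, CCX12, K01, CX20, CCX01],
    [CCX02, CCX12, K01, CX20, CCX01],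
    [CX20, CCX01, K01, CX21, CCX01],
    [CX21, CCX01, K01, CX21, CCX01],
    [CCX02, CCX01, K01, CX21, CCX01],
    [CCX12, CCX01, K01, CX21, CCX01],
    [CX10, CCX02, K01, CX21, CCX01],
    [CCX01, CCX02, K01, CX21, CCX01],
    [CCX12, CCX02, K01, CX21, CCX01],
    [CX02, CCX12, K01, CX21, CCX01],
    [CCX01, CCX12, K01, CX21, CCX01],
    [CCX02, CCX12, K01, CX21, CCX01],
    [CCX02, CCX01, CZ01, K01, CCX01],
    [CCX12, CCX01, CZ01, K01, CCX01],
    [CX10, CCX02, CZ01, K01, CCX01],
    [CX12, CCX02, CZ01, K01, CCX01],
    [CCX01, CCX02, CZ01, K01, CCX01],
    [CCX12, CCX02, CZ01, K01, CCX01],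
    [CX02, CCX12, CZ01, K01, CCX01],
    [CCX01, CCX12, CZ01, K01, CCX01],
    [CCX02, CCX12, CZ01, K01, CCX01],
    [CX20, CCX01, K01, CX01, CX20, CCX01],
    [CX21, CCX01, K01, CX01, CX20, CCX01],
    [CCX02, CCX01, K01, CX01, CX20, CCX01],
    [CCX12, CCX01, K01, CX01, CX20, CCX01],
    [K01, CCX01, K01, CX01, CX20, CCX01],
    [CX12, CCX02, K01, CX01, CX20, CCX01],
    [CCX01, CCX02, K01, CX01, CX20, CCX01],
    [CCX12, CCX02, K01, CX01, CX20, CCX01],
    [CX02, CCX12, K01, CX01, CX20, CCX01],
    [CCX01, CCX12, K01, CX01, CX20, CCX01],
    [CCX02, CCX12, K01, CX01, CX20, CCX01],
    [CCX02, CCX01, K12, CX01, CX20, CCX01],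
    [CCX12, CCX01, K12, CX01, CX20, CCX01],
    [CX10, CCX02, K12, CX01, CX20, CCX01],
    [CCX01, CCX02, K12, CX01, CX20, CCX01],
    [CCX12, CCX02, K12, CX01, CX20, CCX01],
    [CX01, CCX12, K12, CX01, CX20, CCX01],
    [CX02, CCX12, K12, CX01, CX20, CCX01],
    [CCX01, CCX12, K12, CX01, CX20, CCX01],
    [CCX02, CCX12, K12, CX01, CX20, CCX01],
    [CCX02, CCX01, CX02, K01, CX21, CCX01],
    [CCX12, CCX01, CX02, K01, CX21, CCX01],
    [CX10, CCX02, CX02, K01, CX21, CCX01],
    [CX12, CCX02, CX02, K01, CX21, CCX01],
    [CCX01, CCX02, CX02, K01, CX21, CCX01],
    [CCX12, CCX02, CX02, K01, CX21, CCX01],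
    [CCX01, CCX12, CX02, K01, CX21, CCX01],
    [CCX02, CCX12, CX02, K01, CX21, CCX01],
    [CCX02, CCX01, CX02, K01, CX01, CX20, CCX01],
    [CCX12, CCX01, CX02, K01, CX01, CX20, CCX01],
    [K01, CCX01, CX02, K01, CX01, CX20, CCX01],
    [CCX01, CCX02, CX02, K01, CX01, CX20, CCX01],
    [CCX12, CCX02, CX02, K01, CX01, CX20, CCX01],
    [CCX01, CCX12, CX02, K01, CX01, CX20, CCX01],
    [CCX02, CCX12, CX02, K01, CX01, CX20, CCX01],
    [CCX12, K12, CCX12, CX21, CCX01],
    [CCX02, CX20, CCX01, K01, CCX01],
    [CCX01, CX10, CCX02, K01, CCX01],
    [CCX01, K01, CCX01, CX01, CX20, CCX01],
    [CCX12, K12, CCX12, CX01, CX20, CCX01],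
    [CX01, CX20, CCX01, K01, CX20, CCX01],
    [CCX02, CX20, CCX01, K01, CX20, CCX01],
    [CX10, CX21, CCX01, K01, CX20, CCX01],
    [CCX12, CX21, CCX01, K01, CX20, CCX01],
    [CX12, CX01, CCX12, K01, CX20, CCX01],
    [CCX01, CX01, CCX12, K01, CX20, CCX01],
    [CX21, CX20, CCX01, K01, CX21, CCX01],
    [CCX02, CX20, CCX01, K01, CX21, CCX01],
    [CCX12, CX21, CCX01, K01, CX21, CCX01],
    [CX02, CX10, CCX02, K01, CX21, CCX01],
    [CCX01, CX10, CCX02, K01, CX21, CCX01],
    [CCX02, CX02, CCX12, K01, CX21, CCX01],
    [CX02, CX10, CCX02, CZ01, K01, CCX01],
    [CCX01, CX10, CCX02, CZ01, K01, CCX01],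
    [CCX12, CX12, CCX02, CZ01, K01, CCX01],
    [CCX02, CX02, CCX12, CZ01, K01, CCX01],
    [CCX02, CX20, CCX01, K01, CX01, CX20, CCX01],
    [CCX12, CX21, CCX01, K01, CX01, CX20, CCX01],
    [CCX01, K01, CCX01, K01, CX01, CX20, CCX01],
    [CCX02, K01, CCX01, K01, CX01, CX20, CCX01],
    [CCX12, K01, CCX01, K01, CX01, CX20, CCX01],
    [CCX12, CX12, CCX02, K01, CX01, CX20, CCX01],
    [CCX02, CX02, CCX12, K01, CX01, CX20, CCX01],
    [CCX01, CX10, CCX02, K12, CX01, CX20, CCX01],
    [CCX01, CX01, CCX12, K12, CX01, CX20, CCX01],
    [CCX02, CX02, CCX12, K12, CX01, CX20, CCX01],
    [CCX01, CX10, CCX02, CX02, K01, CX21, CCX01],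
    [CCX12, CX12, CCX02, CX02, K01, CX21, CCX01],
    [CCX01, K01, CCX01, CX02, K01, CX01, CX20, CCX01],
    [CCX02, K01, CCX01, CX02, K01, CX01, CX20, CCX01],
    [CCX12, K01, CCX01, CX02, K01, CX01, CX20, CCX01],
    [CCX01, CX01, CX20, CCX01, K01, CX20, CCX01],
    [CCX02, CX01, CX20, CCX01, K01, CX20, CCX01],
    [CCX12, CX01, CX20, CCX01, K01, CX20, CCX01],
    [CCX01, CX10, CX21, CCX01, K01, CX20, CCX01],
    [CCX02, CX10, CX21, CCX01, K01, CX20, CCX01],
    [CCX12, CX10, CX21, CCX01, K01, CX20, CCX01],
    [CCX01, CX12, CX01, CCX12, K01, CX20, CCX01],
    [CCX02, CX12, CX01, CCX12, K01, CX20, CCX01],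
    [CCX12, CX12, CX01, CCX12, K01, CX20, CCX01],
    [CCX01, CX21, CX20, CCX01, K01, CX21, CCX01],
    [CCX02, CX21, CX20, CCX01, K01, CX21, CCX01],
    [CCX12, CX21, CX20, CCX01, K01, CX21, CCX01],
    [CCX01, CX02, CX10, CCX02, K01, CX21, CCX01],
    [CCX02, CX02, CX10, CCX02, K01, CX21, CCX01],
    [CCX12, CX02, CX10, CCX02, K01, CX21, CCX01],
    [CCX01, CX02, CX10, CCX02, CZ01, K01, CCX01],
    [CCX02, CX02, CX10, CCX02, CZ01, K01, CCX01],
    [CCX12, CX02, CX10, CCX02, CZ01, K01, CCX01],
    [CCX12, CCX02, CCX01, K01, CCX01],
    [CCX02, CCX12, CCX01, K01, CCX01],
    [CCX12, CCX01, CCX02, K01, CCX01],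
    [CCX01, CCX12, CCX02, K01, CCX01],
    [CCX02, CCX01, CCX12, K01, CCX01],
    [CCX01, CCX02, CCX12, K01, CCX01],
    [CCX12, CCX02, CCX01, K01, CX20, CCX01],
    [CCX02, CCX12, CCX01, K01, CX20, CCX01],
    [CCX12, CCX01, CCX02, K01, CX20, CCX01],
    [CCX01, CCX12, CCX02, K01, CX20, CCX01],
    [CCX02, CCX01, CCX12, K01, CX20, CCX01],
    [CCX01, CCX02, CCX12, K01, CX20, CCX01],
    [CCX12, CCX02, CCX01, K01, CX21, CCX01],
    [CCX02, CCX12, CCX01, K01, CX21, CCX01],
    [CCX12, CCX01, CCX02, K01, CX21, CCX01],
    [CCX01, CCX12, CCX02, K01, CX21, CCX01],
    [CCX02, CCX01, CCX12, K01, CX21, CCX01],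
    [CCX01, CCX02, CCX12, K01, CX21, CCX01],
    [CCX12, CCX02, CCX01, CZ01, K01, CCX01],
    [CCX02, CCX12, CCX01, CZ01, K01, CCX01],
    [CCX12, CCX01, CCX02, CZ01, K01, CCX01],
    [CCX01, CCX12, CCX02, CZ01, K01, CCX01],
    [CCX02, CCX01, CCX12, CZ01, K01, CCX01],
    [CCX01, CCX02, CCX12, CZ01, K01, CCX01],
    [CCX12, CCX02, CCX01, K01, CX01, CX20, CCX01],
    [CCX02, CCX12, CCX01, K01, CX01, CX20, CCX01],
    [CCX12, CCX01, CCX02, K01, CX01, CX20, CCX01],
    [CCX01, CCX12, CCX02, K01, CX01, CX20, CCX01],
    [CCX02, CCX01, CCX12, K01, CX01, CX20, CCX01],
    [CCX01, CCX02, CCX12, K01, CX01, CX20, CCX01],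
    [CCX12, CCX02, CCX01, K12, CX01, CX20, CCX01],
    [CCX02, CCX12, CCX01, K12, CX01, CX20, CCX01],
    [CCX12, CCX01, CCX02, K12, CX01, CX20, CCX01],
    [CCX01, CCX12, CCX02, K12, CX01, CX20, CCX01],
    [CCX02, CCX01, CCX12, K12, CX01, CX20, CCX01],
    [CCX01, CCX02, CCX12, K12, CX01, CX20, CCX01],
    [CCX12, CCX02, CCX01, CX02, K01, CX21, CCX01],
    [CCX02, CCX12, CCX01, CX02, K01, CX21, CCX01],
    [CCX12, CCX01, CCX02, CX02, K01, CX21, CCX01],
    [CCX01, CCX12, CCX02, CX02, K01, CX21, CCX01],
    [CCX02, CCX01, CCX12, CX02, K01, CX21, CCX01],
    [CCX01, CCX02, CCX12, CX02, K01, CX21, CCX01],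
    [CCX12, CCX02, CCX01, CX02, K01, CX01, CX20, CCX01],
    [CCX02, CCX12, CCX01, CX02, K01, CX01, CX20, CCX01],
    [CCX12, CCX01, CCX02, CX02, K01, CX01, CX20, CCX01],
    [CCX01, CCX12, CCX02, CX02, K01, CX01, CX20, CCX01],
    [CCX02, CCX01, CCX12, CX02, K01, CX01, CX20, CCX01],
    [CCX01, CCX02, CCX12, CX02, K01, CX01, CX20, CCX01],
    [CX01, CCX12, K12, CCX12, CX21, CCX01],
    [CX02, CCX12, K12, CCX12, CX21, CCX01],
    [CX20, CCX01, K01, CCX01, CX01, CX20, CCX01],
    [CX21, CCX01, K01, CCX01, CX01, CX20, CCX01],
    [CX01, CCX12, K12, CCX12, CX01, CX20, CCX01],
    [CX02, CCX12, K12, CCX12, CX01, CX20, CCX01],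
    [CX01, CCX12, CX21, CCX01, K01, CX20, CCX01],
    [CX02, CCX12, CX21, CCX01, K01, CX20, CCX01],
    [CX10, CCX02, CX20, CCX01, K01, CX21, CCX01],
    [CX12, CCX02, CX20, CCX01, K01, CX21, CCX01],
    [CX01, CCX12, CX21, CCX01, K01, CX21, CCX01],
    [CX10, CCX02, CX02, CCX12, K01, CX21, CCX01],
    [CX01, CCX12, CX12, CCX02, CZ01, K01, CCX01],
    [CX02, CCX12, CX12, CCX02, CZ01, K01, CCX01],
    [CX10, CCX02, CX20, CCX01, K01, CX01, CX20, CCX01],
    [CX01, CCX12, CX21, CCX01, K01, CX01, CX20, CCX01],
    [CCX02, CCX01, K01, CCX01, K01, CX01, CX20, CCX01],
    [CCX12, CCX01, K01, CCX01, K01, CX01, CX20, CCX01],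
    [CCX01, CCX02, K01, CCX01, K01, CX01, CX20, CCX01],
    [CCX12, CCX02, K01, CCX01, K01, CX01, CX20, CCX01],
    [CCX01, CCX12, K01, CCX01, K01, CX01, CX20, CCX01],
    [CCX02, CCX12, K01, CCX01, K01, CX01, CX20, CCX01],
    [CCX02, CCX01, K01, CCX01, CX02, K01, CX01, CX20, CCX01],
    [CCX12, CCX01, K01, CCX01, CX02, K01, CX01, CX20, CCX01],
    [CCX02, CCX01, CX01, CX20, CCX01, K01, CX20, CCX01],
    [CCX12, CCX01, CX01, CX20, CCX01, K01, CX20, CCX01],
    [CCX01, CCX02, CX10, CX21, CCX01, K01, CX20, CCX01],
    [CCX01, CCX12, CX10, CX21, CCX01, K01, CX20, CCX01],
    [CCX02, CCX01, CX21, CX20, CCX01, K01, CX21, CCX01],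
    [CCX12, CCX01, CX21, CX20, CCX01, K01, CX21, CCX01],
    [CCX02, CCX01, CX02, CX10, CCX02, CZ01, K01, CCX01],
    [CCX12, CCX01, CX02, CX10, CCX02, CZ01, K01, CCX01]]"

definition coset_row_valid :: "letter list \<Rightarrow> (nat \<times> letter list) list \<Rightarrow> bool" where
  "coset_row_valid r targets \<longleftrightarrow> list_all2 (\<lambda>s (j, h). j < length coset_reps \<and>
     list_all (\<lambda>c. \<not> is_toffoli (gate_of c)) h \<and>
     same_action (s # r) (coset_reps ! j @ h)) generators targets"

definition coset_table :: "(nat \<times> letter list) list list" where
  "coset_table = [
    [(1, []), (0, [K01]), (0, [CX01]), (0, [S12])],
    [(0, []), (8, []), (1, [CX02, CX01]), (2, [S12])],
    [(10, []), (3, [K01]), (2, [CX01]), (1, [S12])],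
    [(12, []), (2, [K01]), (9, [CX10, CX01]), (3, [S12])],
    [(7, [CX20]), (16, []), (14, []), (9, [S12])],
    [(6, [CX21]), (18, []), (5, [CX02, CX01]), (5, [CX12])],
    [(5, [CX21]), (22, []), (6, [CX02, CX01]), (10, [S12])],
    [(4, [CX20]), (21, []), (23, [CX10, CX02, CX01]), (11, [S12])],
    [(19, []), (1, []), (8, [CX12, CX10]), (8, [K12, S12])],
    [(23, []), (9, [K01, S01, CX01]), (3, [S01, CX01]), (4, [S12])],
    [(2, []), (35, [CX21]), (10, [CX02]), (6, [S12])],
    [(55, []), (13, [K01]), (13, [CX01]), (7, [S12])],
    [(3, []), (30, [CX20]), (24, [CX20, CX02]), (13, [S12])],
    [(57, []), (11, [K01]), (11, [CX01]), (12, [S12])],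
    [(24, []), (27, []), (4, []), (14, [S01, CX12, CX02])],
    [(54, [CX20]), (31, []), (25, []), (23, [S12])],
    [(29, []), (4, []), (16, [CX12, CX10]), (20, [K12, S12])],
    [(56, [CX21]), (34, []), (59, [CX21, CX10, CX02, CX01]), (17, [CX12])],
    [(33, []), (5, []), (27, [S01, CX02, CX01]), (18, [K12, S12])],
    [(8, []), (36, [K01, CZ01]), (19, [K01, CX02, K01, CX10]), (21, [K12, S12])],
    [(36, []), (20, [S01, CZ01]), (20, [CX10, X0]), (16, [K12, S12])],
    [(65, []), (7, []), (21, [CX12, CX10]), (19, [K12, S12])],
    [(67, []), (6, []), (64, [S01, CX02, CX01]), (22, [K12, S12])],
    [(9, []), (64, [S01, CX12, CX01]), (7, [S01, CX12, CX01]), (15, [S12])],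
    [(14, []), (71, []), (12, [S02, CX02]), (25, [S01, CX12, CX02])],
    [(70, [CX21, CX01]), (42, []), (15, []), (24, [S01, CX12, CX02])],
    [(69, [S02, CX21, CX01]), (41, []), (58, [CX12, CX10]), (26, [S01, CX12, CX02])],
    [(40, []), (14, []), (18, [CX02, CX10, CX01]), (32, [K12, S12, CX02, CX10, CX01])],
    [(43, []), (32, [K12, S12, CX01, CX12]), (28, [CZ12, CZ01, Z2, Z0]), (28, [S01, CX12, CX02])],
    [(16, []), (61, [CZ01, K01]), (29, [K01, CX02, K01, CX12, CX10, X0]), (37, [K12, S12])],
    [(77, []), (12, [CX20]), (30, [CX12, CX10]), (36, [K12, S12])],
    [(80, []), (15, []), (79, []), (38, [K12, S12])],
    [(46, []), (28, [K12, CX12, CZ02, CX21]), (39, [S01, CX02, CX01]), (27, [S12, K01, S02, CZ02, CZ01])],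
    [(18, []), (60, [K12, S12, CX12]), (49, [S01, CX02, CX01]), (34, [K12, S12])],
    [(87, []), (17, []), (41, [S01, CX02, CX01]), (33, [K12, S12])],
    [(90, []), (10, [CX21]), (71, [S02, S01, CX02, CX01]), (35, [K12, S12])],
    [(20, []), (19, [CZ01, K01]), (36, [K01, CX02, K01, CX12, CX10, X0]), (30, [K12, S12])],
    [(96, []), (38, [S01, CZ01]), (37, [CX10, X0]), (29, [K12, S12])],
    [(99, []), (37, [S01, CZ01]), (94, [S01, CX01, X1]), (31, [K12, S12])],
    [(49, []), (39, [K12, S12, CZ01, X0, CX02]), (32, [CX02, CX10, CX01]), (39, [K12, K01, CX02, CZ12, CX20, CX10, CX02])],
    [(27, []), (105, []), (46, [CX02, CX10, CX01]), (47, [K12, S12, CX02, CX10, CX01])],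
    [(107, []), (26, []), (34, [CX02, CX10, CX01]), (46, [K12, S12, CX02, CX10, CX01])],
    [(110, []), (25, []), (86, [S01]), (48, [K12, S12, CX02, CX10, CX01])],
    [(28, []), (89, [K12, CX01, CX12]), (43, [CZ12, CZ02, CZ01, Z0]), (44, [S01, CX12, CX02])],
    [(115, []), (48, [K12, S12, CX01, CX12]), (44, [CZ12, CZ01, Z2, Z0]), (43, [S01, CX12, CX02])],
    [(119, []), (47, [K12, S12, CX01, CX12]), (117, []), (45, [S01, CX12, CX02])],
    [(32, []), (72, [K12, CX12, CZ02, CX21]), (40, [S01, CX02, CX01]), (41, [S12, K01, S02, CZ02, CZ01])],
    [(125, []), (45, [K12, CX12, CZ02, CX21]), (50, [S01, CX02, CX01]), (40, [S12, K01, S02, CZ02, CZ01])],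
    [(127, []), (44, [K12, CX12, CZ02, CX21]), (114, [CZ12, CX10, K12, S12, CZ02, CX02, X1]), (42, [S12, K01, S02, CZ02, CZ01])],
    [(39, []), (131, []), (33, [CX02, CX10, CX01]), (50, [K12, K01, CX02, CZ12, CX20, CX10, CX02])],
    [(132, []), (51, [K12, S12, CZ01, X0, CX02]), (47, [CX02, CX10, CX01]), (49, [K12, K01, CX02, CZ12, CX20, CX10, CX02])],
    [(134, []), (50, [K12, S12, CZ01, X0, CX02]), (123, [K01, CX12, K01, S01, X0]), (51, [K12, K01, CX02, CZ12, CX20, CX10, CX02])],
    [(58, [CX20, CX12]), (68, []), (53, [CX02, CX01]), (54, [S12])],
    [(59, [CX20, CX10]), (66, []), (52, [CX02, CX01]), (55, [S12])],
    [(15, [CX20]), (91, [CX21]), (57, [CX02]), (52, [S12])],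
    [(11, []), (81, [CX20]), (70, [CX20, CX02]), (53, [S12])],
    [(17, [CX21]), (78, [CX20]), (69, [CX20, CX02]), (57, [S12])],
    [(13, []), (88, [CX21]), (54, [CX02]), (56, [S12])],
    [(52, [CX12, CX20]), (79, []), (26, [CX12, CX10]), (59, [S12, CX12])],
    [(53, [CX20, CX10]), (86, [S02, S01, CX12, CX01]), (17, [S02, S01, CX12, CX01]), (58, [CX21, CX12])],
    [(62, [K12, K01, CX21]), (33, [K12, S12, CX12]), (60, [CZ12, CZ02, Z2]), (60, [CX12])],
    [(63, [CZ02, CZ01]), (29, [K01, CZ01]), (131, [K01, CZ01, CX02, Z0]), (64, [K12, S12])],
    [(60, [K12, CX12, K01]), (93, [K01, CZ01]), (62, [K01, CX02, K01, CX10]), (65, [K12, S12])],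
    [(61, [CZ02, CZ01]), (92, [K01, CZ01]), (138, [CX02, K01, CX10, CX02, K01, CX10]), (66, [K12, S12])],
    [(138, []), (23, [CX10, CX02, CX01]), (22, [CX02, CX10, CX01]), (61, [K12, S12])],
    [(21, []), (85, [K01, CZ12]), (65, [K01, CX02, K01, CX12]), (62, [K12, S12])],
    [(193, []), (53, []), (68, [CX12, CX10]), (63, [K12, S12])],
    [(22, []), (75, [K01, CZ02]), (169, [K12, S02, CZ02, CX12, CX02, X2]), (68, [K12, S12])],
    [(195, []), (52, []), (66, [CX12, CX10]), (67, [K12, S12])],
    [(26, [S02, CX21, CX01]), (111, [S02]), (56, [S02, CX02]), (70, [CX21, CX12, CX10, CX01])],
    [(25, [CX21, CX01]), (108, [S02]), (55, [S02, CX02]), (69, [S02, S01, CX12, CX02])],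
    [(139, []), (24, []), (35, [S12, CX02, CX10, CX01]), (89, [K12, CX02, CX10, CX01])],
    [(112, [S02, CX21, CX01]), (46, [K12, S12, CX01, CX12]), (72, [CZ02, Z0]), (72, [S01, CX12, CX02])],
    [(76, [CZ02, Z2]), (73, [K01, Z2]), (141, []), (94, [K12, S12])],
    [(75, [CZ12, CZ01]), (98, [CX12, K01, S02, CX02]), (74, [K01, CX02, K01, CX12, CX10, X0]), (95, [K12, S12])],
    [(74, [CZ12, CZ01]), (67, [K01, CX20]), (75, [K01, CX02, K01, CX12, CX10, X0]), (96, [K12, S12])],
    [(73, [CZ02, Z2]), (137, [CZ01, K01]), (146, [K01, CX02, K01, X0]), (97, [K12, S12])],
    [(30, []), (99, [K01, CZ01, CX20]), (77, [K01, CX02, K01, X0]), (92, [K12, S12])],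
    [(199, []), (56, [CX20]), (81, [CX12, CX10]), (93, [K12, S12])],
    [(146, []), (58, []), (31, []), (98, [K12, S12])],
    [(31, []), (142, [K01, CZ02]), (172, [K12, K01, S02, CZ02, Z2]), (100, [K12, S12])],
    [(201, []), (55, [CX20]), (78, [CX12, CX10]), (99, [K12, S12])],
    [(85, [CZ02, CZ01]), (95, [CX02, K01, S12, CX12]), (143, [K01, CX02, K01, S01, CX02, CX01, X1]), (86, [K12, S12])],
    [(84, [CZ12, Z2]), (83, [K01, Z2]), (124, [CZ12, K12, S12, X1]), (83, [K01, CX12, K01, X1])],
    [(83, [CZ12, Z2]), (136, [K12, S12, CX12]), (129, [S01, CX02, CX01]), (87, [K12, S12])],
    [(82, [CZ02, CZ01]), (65, [K01, CX21]), (164, [CZ12, CX10, K12, S12, CZ02, CX02, X1]), (88, [K12, S12])],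
    [(151, []), (59, [CX21, CX10, CX02, CX01]), (42, [S01]), (82, [K12, S12])],
    [(34, []), (149, [K01, CZ12]), (125, []), (84, [K12, S12])],
    [(205, []), (57, [CX21]), (111, [S01, CX02, CX01]), (85, [K12, S12])],
    [(122, []), (43, [K12, CX21, CZ01]), (105, [K12, S02, CZ02, CX21]), (71, [S01, K12, CZ02, CZ01])],
    [(35, []), (96, [K01, CZ01, CX21]), (159, [K12, S02, CZ02, CX21]), (91, [K12, S12])],
    [(207, []), (54, [CX21]), (108, [S01, CX02, CX01]), (90, [K12, S12])],
    [(95, [K01, CX12, K01, CX02]), (63, [CZ01, K01]), (92, [K01, CX02, K01, CX12, CX10, X0]), (77, [K12, S12])],
    [(98, [K01, CX02, K01, CX12]), (62, [CZ01, K01]), (154, [K01, Z0, CX10, CX02, K01, CX12, CX10]), (78, [K12, S12])],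
    [(154, []), (94, [CZ01, CX10, X0]), (38, [CX10, CX01, X0]), (73, [K12, S12])],
    [(92, [K01, CX12, K01, CX02]), (82, [S12, K01, CZ12, CX02]), (95, [K01, CX02, K01, CX12]), (74, [K12, S12])],
    [(37, []), (90, [CX21, CZ01, K01]), (96, [K01, CX02, K01, CX12]), (75, [K12, S12])],
    [(211, []), (100, [S01, CZ01]), (100, [CX10, X0]), (76, [K12, S12])],
    [(93, [K01, CX02, K01, CX12]), (74, [K12, S02, CZ02, CX12]), (153, [S01, CX01, X1]), (79, [K12, S12])],
    [(38, []), (77, [CX20, CZ01, K01]), (187, [S01, CX01, X1]), (81, [K12, S12])],
    [(213, []), (97, [S01, CZ01]), (97, [CX10, X0]), (80, [K12, S12])],
    [(104, [CZ02, Z2]), (150, [CX20, K12, S12, CX12, Z2, CX02]), (145, [K01, CX02, K01, CZ02, X0]), (123, [K12, S12, CX02, CX10, CX01])],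
    [(103, [CZ12, CZ02, CZ01, Z2]), (145, [CX12, K01, CZ12, CX02, CX10, Z0, CX20]), (106, [CX20, K12, CX02, K01, CZ12, CX20, CX02]), (124, [K12, S12, CX02, CX10, CX01])],
    [(102, [CZ12, CZ02, CZ01, Z2]), (161, []), (121, [CX02, CX10, CX01]), (125, [K12, S12, CX02, CX10, CX01])],
    [(101, [CZ02, Z2]), (160, []), (167, [K01, CX12, K01, S01, X0]), (126, [K12, S12, CX02, CX10, CX01])],
    [(159, []), (40, []), (89, [K01, S02, CZ01, CX02]), (105, [S01, CX12, CX02])],
    [(129, [K01, CX02, K01, X0]), (106, [CX10, K12, CZ02, X0, CX02, CX10]), (102, [K12, K01, S02, CX12, CX10, CZ02, Z2]), (106, [CZ12, CZ02, CZ01, Z2])],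
    [(41, []), (180, [CX12, K01, S02, CZ02, CX02, CX10]), (132, []), (121, [K12, S12, CX02, CX10, CX01])],
    [(217, []), (70, [S02]), (91, [CX02, CX10, CX01]), (122, [K12, S12, CX02, CX10, CX01])],
    [(130, []), (109, [K12, CZ02, CX21, CX12, X0, CX02]), (150, [S01]), (114, [CX10, CX02, CZ12, S01, Z2])],
    [(42, []), (185, [CX20, K12, CX12, CZ02, CX21, CX02]), (184, [S01]), (128, [K12, S12, CX02, CX10, CX01])],
    [(219, []), (69, [S02]), (88, [CX02, CX10, CX01]), (127, [K12, S12, CX02, CX10, CX01])],
    [(72, [S02, CX21, CX01]), (127, [K12, CX01, CX12]), (112, [CZ12, CZ02, CZ01, Z0]), (115, [S01, CX12, CX02])],
    [(118, [CZ02, Z2]), (152, [K12, CX01, CX12]), (165, [CZ02, Z2]), (116, [S01, CX12, CX02])],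
    [(164, []), (114, [CX02, CZ12, CX10, Z2, CX02]), (48, [K12, S12, CZ01, CX01, CZ12, CX10, Z2]), (109, [CZ02, Z2, CX12, CX10, CX01])],
    [(44, []), (122, [K12, S02, CX21, CX10]), (115, [CZ02, Z2]), (112, [S01, CX12, CX02])],
    [(223, []), (128, [K12, S12, CX01, CX12]), (120, [CZ12, CZ01, Z2, Z0]), (113, [S01, CX12, CX02])],
    [(165, []), (123, [K12, S12, CX01, CX12]), (45, []), (118, [S01, CX12, CX02])],
    [(113, [CZ02, Z2]), (141, [CX02, K01, CX01, Z2]), (147, [CX02, CX10]), (117, [S01, CX12, CX02])],
    [(45, []), (173, [CX02, K01, CZ02, CX01]), (181, [CX02, CX10]), (120, [S01, CX12, CX02])],
    [(225, []), (126, [K12, S12, CX01, CX12]), (116, [CZ12, CZ01, Z2, Z0]), (119, [S01, CX12, CX02])],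
    [(124, [K01, CX12, K01, X1]), (140, [K12, CX12, CZ02, CX21]), (103, [S01, CX02, CX01]), (107, [S12, K01, S02, CZ02, CZ01])],
    [(89, []), (115, [K01, S02, CX21, CZ01]), (139, [S02, S01, CX02, CX01]), (108, [S12, K01, S02, CZ02, CZ01])],
    [(167, []), (117, [K12, CX12, CZ02, CX21]), (51, [K01, CX02, K01, S01, X1]), (101, [S12, K01, S02, CZ02, CZ01])],
    [(121, [K01, CX12, K01, X1]), (147, [CX21, CX12, CX02, K01, X1, CX12]), (83, [K12, S12, CZ12, Z2]), (102, [S12, K01, S02, CZ02, CZ01])],
    [(47, []), (183, [CX21, CX02, K01, CX12]), (87, []), (103, [S12, K01, S02, CZ02, CZ01])],
    [(229, []), (120, [K12, CX12, CZ02, CX21]), (135, [S01, CX02, CX01]), (104, [S12, K01, S02, CZ02, CZ01])],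
    [(48, []), (112, [K12, CX21, CZ01]), (175, [CZ01, K01, CX21, CX02, K01, S01, X1]), (111, [S12, K01, S02, CZ02, CZ01])],
    [(231, []), (116, [K12, CX12, CZ02, CX21]), (133, [S01, CX02, CX01]), (110, [S12, K01, S02, CZ02, CZ01])],
    [(106, [K01, CX02, K01, X0]), (171, []), (84, [CX02, CX10, CX01]), (132, [K12, K01, CX02, CZ12, CX20, CX10, CX02])],
    [(109, []), (170, []), (151, [S01]), (133, [K12, K01, CX02, CZ12, CX20, CX10, CX02])],
    [(169, []), (49, []), (61, [CZ01, CX02, K01, X0]), (131, [K01, CX10, CX02, K01, CX12, CX10, X0, CX01])],
    [(50, []), (162, [K01, S02, CZ02, CX21, CX02, CX10]), (107, []), (129, [K12, K01, CX02, CZ12, CX20, CX10, CX02])],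
    [(235, []), (135, [K12, S12, CZ01, X0, CX02]), (128, [CX02, CX10, CX01]), (130, [K12, K01, CX02, CZ12, CX20, CX10, CX02])],
    [(51, []), (163, [K12, CZ02, CX21, CX12, X0, CX02]), (178, [K01, CX02, K01, X0]), (135, [K12, K01, CX02, CZ12, CX20, CX10, CX02])],
    [(237, []), (133, [K12, S12, CZ01, X0, CX02]), (126, [CX02, CX10, CX01]), (134, [K12, K01, CX02, CZ12, CX20, CX10, CX02])],
    [(194, [K12, K01, CX21]), (84, [K12, S12, CX12]), (238, []), (136, [CX12])],
    [(192, [CZ02, CZ01]), (76, [K01, CZ01]), (170, [K01, CZ01, CX02, Z0]), (138, [K12, S12])],
    [(64, []), (154, [K01, CZ01, CX10, CX02, CX01]), (63, [K01, CX02, K01, CX10, CX02, CX01]), (137, [K12, S12])],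
    [(71, []), (175, [CZ01, K01, CZ02, CX02, CX10, CX01]), (122, [S12, CX02, CX10, CX01]), (152, [K12, CX02, CX10, CX01])],
    [(224, [S02, CX21, CX01]), (121, [K12, S12, CX01, CX12]), (242, []), (140, [S01, CX12, CX02])],
    [(172, []), (118, [K01, CX10, Z2, CX02]), (73, []), (153, [K12, S12])],
    [(198, [CZ02, Z2]), (80, [K01, CX20]), (173, []), (154, [K12, S12])],
    [(175, []), (153, [X0, CX01, CX12, K01, S02, CX21, CX02]), (82, [K01, CX12, K01, CX02, CX10, CX01, X0]), (150, [CZ12, K12, S12, CX02, CX10, CX01, X0])],
    [(200, [CZ12, CZ01]), (156, [CX12, K01, S02, CX02]), (244, []), (155, [K12, S12])],
    [(178, []), (102, [CZ01, CX10, K12, S02, CZ02, CX12, X0]), (101, [K12, K01, S02, CZ02, Z2]), (145, [CZ12, CZ02, CZ01, Z2])],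
    [(79, []), (239, [CZ12, K12, S02, CX21, X0, CX02]), (76, [K01, CX02, K01, X0]), (156, [K12, S12])],
    [(181, []), (124, [CX12, K01, S12, CX01, Z2, CX12]), (118, [CX10, CX02]), (147, [CX02, CX01])],
    [(204, [CZ02, CZ01]), (155, [CX02, K01, S12, CX12]), (176, [K01, CX02, K01, S01, CX02, CX01, X1]), (151, [K12, S12])],
    [(206, [CZ12, Z2]), (87, [K01, CX21]), (248, []), (149, [K01, CX12, K01, X1])],
    [(184, []), (101, [K12, S12, CZ01, X1, CX12, CX20]), (109, [S01]), (143, [S12, K01, CZ01, S02, CZ02, CZ01, Z2])],
    [(86, []), (238, [CX21, CZ12, K12, CX21]), (130, [S01]), (148, [K12, S12])],
    [(228, []), (113, [K12, CX21, CZ01]), (160, [K12, S02, CZ02, CX21]), (139, [S01, K12, CZ02, CZ01])],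
    [(187, []), (143, [K12, S02, CZ02, CX12, CX10, CX01, X0]), (98, [CX10, CX01, X0]), (141, [K12, S12])],
    [(94, []), (138, [CX02, CX10, CZ01, K01, S01]), (93, [K01, CX02, K01, CX12, CX10, CX01, X0]), (142, [K12, S12])],
    [(212, [K01, CX12, K01, CX02]), (148, [S12, K01, CZ12, CX02]), (250, []), (144, [K12, S12])],
    [(210, [K01, CX02, K01, CX12]), (144, [K12, S02, CZ02, CX12]), (188, [S01, CX01, X1]), (146, [K12, S12])],
    [(216, [CZ02, Z2]), (186, [CX20, K12, S12, CX12, Z2, CX02]), (179, [K01, CX02, K01, CZ02, X0]), (167, [K12, S12, CX02, CX10, CX01])],
    [(218, [CZ12, CZ02, CZ01, Z2]), (179, [CX12, K01, CZ12, CX02, CX10, Z0, CX20]), (253, []), (168, [K12, S12, CX02, CX10, CX01])],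
    [(105, []), (187, [K01, CZ01, K01, S02, CX02, CX10]), (90, [K01, S02, CZ01, CX02]), (160, [S01, CX12, CX02])],
    [(256, []), (104, []), (152, [K01, S02, CZ01, CX02]), (159, [S01, CX12, CX02])],
    [(258, []), (103, []), (249, [K01, S02, CZ01, CX10, CX02]), (161, [S01, CX12, CX02])],
    [(236, [K01, CX02, K01, X0]), (132, [CX10, K12, CZ02, CX12, CX20, CX02]), (240, [K12, K01, CX12, CX10, CZ02, Z2]), (162, [CZ12, CZ02, CZ01, Z2])],
    [(234, []), (134, [K12, CZ02, CX21, CX12, X0, CX02]), (185, [S01]), (164, [CX10, CX02, CZ12, S01, Z2])],
    [(114, []), (169, [K12, K01, CZ02, CX21, Z0]), (85, [K12, S12, CZ01, CX01, CZ12, CX10, Z2]), (163, [CZ02, Z2, CX12, CX10, CX01])],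
    [(117, []), (249, [K12, CX01, CX12, CZ02, Z2]), (113, [CZ02, Z2]), (166, [S01, CX12, CX02])],
    [(222, [CZ02, Z2]), (174, [CX02, K01, CX01, Z2]), (182, [CX02, CX10]), (165, [S01, CX12, CX02])],
    [(123, []), (242, [CX21, CX02, CZ12, K12, CX21]), (104, [K01, CX02, K01, S01, X1]), (157, [S12, K01, S02, CZ02, CZ01])],
    [(230, [K01, CX12, K01, X1]), (182, [CX21, CX12, CX02, K01, X1, CX12]), (247, [K01, CZ12, CX12, K01, CZ01, CX21]), (158, [S12, K01, S02, CZ02, CZ01])],
    [(131, []), (164, [K12, CX12, CX02, K01, X0]), (67, [CX12, CZ02, CX20, K12, CZ02, X0]), (170, [K01, CX10, CX02, K01, CX12, CX10, X0, CX01])],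
    [(261, [CX21, CX01]), (130, []), (137, [CZ01, CX02, K01, X0]), (169, [K01, CX10, CX02, K01, CX12, CX10, X0, CX01])],
    [(260, [CX02, K01, CZ01, K01, CX21, CX20, X0, CX02]), (129, []), (239, [CX20, K12, CX12, CX01, CX20]), (171, [K01, CX10, CX02, K01, CX12, CX10, X0, CX01])],
    [(141, []), (243, [CZ01, K01, CX10, CX21, CX02]), (80, [K01, CX02, K01, CZ02, X0]), (188, [K12, S12])],
    [(263, [CX02, CZ12, CX10, CX02]), (119, [K01, CX20, CX10, CX02]), (142, []), (187, [K12, S12])],
    [(262, [K12, K01, CX02, CZ12, CX20, CX10, CX02]), (166, [K01, CX10, Z2, CX02]), (245, [CZ02, Z2, CX12, CX10]), (189, [K12, S12])],
    [(143, []), (139, [CX20, CX12, K01, S01, CZ01, CX20]), (127, [K01, CZ12, CX12, K01, S01, CZ01, CX20]), (185, [CZ12, K12, S12, CX02, CX10, CX01, X0])],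
    [(264, []), (189, [X0, CX01, CX12, K01, S02, CX21, CX02]), (148, [K01, CX12, K01, CX02, CX10, CX01, X0]), (184, [CZ12, K12, S12, CX02, CX10, CX01, X0])],
    [(265, []), (188, [X0, CX01, CX12, K01, S02, CX21, CX02]), (246, [S01]), (186, [CZ12, K12, S12, CX02, CX10, CX01, X0])],
    [(145, []), (241, [CZ12, CX10, K12, S02, CZ02, X1, CX12]), (134, [K01, CX02, K01, X0]), (179, [CZ12, CZ02, CZ01, Z2])],
    [(259, [CX10, K12, CZ02, CX02, CX10, CX21, CX01]), (158, [CZ01, CX10, K12, S02, CZ02, CX12, X0]), (157, [K12, K01, S02, CZ02, Z2]), (178, [CZ12, CZ02, CZ01, Z2])],
    [(254, [CX10, K12, CZ02, CX02, CX10, CX21, CX01]), (107, [CX10, K12, CZ02, CX20, CX12, CX02]), (241, [K12, K01, CZ02, Z2]), (180, [CZ12, CZ02, CZ01, Z2])],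
    [(147, []), (248, [CX12, K01, CZ12, CX02, CX01]), (119, [CX10, CX02]), (182, [CX02, CX01])],
    [(267, [CZ12, Z2]), (168, [CX12, K01, S12, CX01, Z2, CX12]), (166, [CX10, CX02]), (181, [CX02, CX01])],
    [(266, [CZ02, CZ01]), (125, [CX12, K01, CX02, CX21]), (243, [CX02, CX10, CZ02, CX21, CX12]), (183, [CX02, CX01])],
    [(150, []), (240, [CX02, CZ12, K12, S12, CX12, CX20]), (110, [S01]), (176, [S12, K01, CZ01, S02, CZ02, CZ01, Z2])],
    [(255, [K12, CZ02, CX02, CX21, CX20]), (110, [K12, CZ02, CX01, CX12, CX20, CX01]), (163, [S01]), (175, [S12, K01, CZ01, S02, CZ02, CZ01, Z2])],
    [(257, [K12, CZ02, CX02, CX21, CX20]), (157, [K12, S12, CZ01, X1, CX12, CX20]), (252, [S12, K01, CZ01, S02, Z2]), (177, [S12, K01, CZ01, S02, CZ02, CZ01, Z2])],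
    [(153, []), (159, [K01, CX01, CX12, K01, CX20, CX02]), (99, [CX10, CX01, X0]), (173, [K12, S12])],
    [(269, [S01]), (177, [K12, S02, CZ02, CX12, CX10, CX01, X0]), (156, [CX10, CX01, X0]), (172, [K12, S12])],
    [(268, [CX02, K01, CX12, CX02, K01, S01, CX02]), (176, [K12, S02, CZ02, CX12, CX10, CX01, X0]), (251, [K01, CX10, CX02, K01, X1, CX12]), (174, [K12, S12])],
    [(239, [K12, CX12, K01, CX12, CX10]), (209, [K01, CZ01]), (191, [K01, CX02, K01, CX10]), (192, [K12, S12])],
    [(238, [K12, CX12, CX02, K01, CX12]), (208, [K01, CZ01]), (190, [K01, CX02, K01, CX10]), (193, [K12, S12])],
    [(137, [CZ02, CZ01]), (203, [K01, CZ12]), (195, [K01, CX02, K01, CX12]), (190, [K12, S12])],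
    [(66, []), (197, [K01, CZ02]), (261, [K12, S02, CZ02, CX12, CX02, X2]), (191, [K12, S12])],
    [(136, [K12, CX12, K01]), (196, [K01, CZ02]), (260, [K12, S02, CZ02, CX12, CX02, X2]), (195, [K12, S12])],
    [(68, []), (202, [K01, CZ12]), (192, [K01, CX02, K01, CX12]), (194, [K12, S12])],
    [(245, [CX02, CZ12, CX10, CX02]), (194, [K01, CX20]), (197, [K01, CX02, K01, CX12, CX10, X0]), (210, [K12, S12])],
    [(244, [CZ01, K01, CX21, CX02, K01, X0]), (193, [K01, CX20]), (196, [K01, CX02, K01, CX12, CX10, X0]), (211, [K12, S12])],
    [(142, [CZ02, Z2]), (212, [K01, CZ01, CX20]), (201, [K01, CX02, K01, X0]), (208, [K12, S12])],
    [(78, []), (200, [K01, CZ02, CX20]), (263, [K12, K01, S02, CZ02, Z2]), (209, [K12, S12])],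
    [(144, [CZ12, CZ01]), (199, [K01, CZ02, CX20]), (262, [K12, K01, S02, CZ02, Z2]), (213, [K12, S12])],
    [(81, []), (211, [K01, CZ01, CX20]), (198, [K01, CX02, K01, X0]), (212, [K12, S12])],
    [(246, [CZ01, K01, CX20, CX12, K01, X1]), (195, [K01, CX21]), (233, [S01, CX02, CX01]), (204, [K12, S12])],
    [(247, [CZ02, CZ01, CX02, CX01]), (192, [K01, CX21]), (232, [S01, CX02, CX01]), (205, [K12, S12])],
    [(148, [CZ02, CZ01]), (207, [K01, CZ12, CX21]), (231, []), (202, [K12, S12])],
    [(88, []), (213, [K01, CZ01, CX21]), (255, [K12, S02, CZ02, CX21]), (203, [K12, S12])],
    [(149, [CZ12, Z2]), (210, [K01, CZ01, CX21]), (254, [K12, S02, CZ02, CX21]), (207, [K12, S12])],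
    [(91, []), (204, [K01, CZ12, CX21]), (228, []), (206, [K12, S12])],
    [(251, [K01, CX12, K01, CX02, CX10, X0]), (191, [CZ01, K01]), (209, [K01, CX02, K01, CX12, CX10, X0]), (198, [K12, S12])],
    [(250, [CX12, K01, CX12, CX02, K01, CX02]), (190, [CZ01, K01]), (208, [K01, CX02, K01, CX12, CX10, X0]), (199, [K12, S12])],
    [(156, [K01, CX02, K01, CX12]), (206, [CX21, CZ01, K01]), (213, [K01, CX02, K01, CX12]), (196, [K12, S12])],
    [(97, []), (201, [CX20, CZ01, K01]), (269, [S01, CX01, X1]), (197, [K12, S12])],
    [(155, [K01, CX12, K01, CX02]), (198, [CX20, CZ01, K01]), (268, [S01, CX01, X1]), (201, [K12, S12])],
    [(100, []), (205, [CX21, CZ01, K01]), (210, [K01, CX02, K01, CX12]), (200, [K12, S12])],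
    [(241, [S02, CZ02, Z2]), (259, []), (227, [CX02, CX10, CX01]), (228, [K12, S12, CX02, CX10, CX01])],
    [(240, [CZ01, S02, CZ02, CZ01, Z2]), (257, []), (226, [CX02, CX10, CX01]), (229, [K12, S12, CX02, CX10, CX01])],
    [(157, [CZ02, Z2]), (256, [S02, CX21, CX01]), (237, []), (226, [K12, S12, CX02, CX10, CX01])],
    [(108, []), (264, [CZ01, K01, CZ02, CX20, CX01, CX12]), (256, [K12, S12, CZ01, CX20, CX10, CX02]), (227, [K12, S12, CX02, CX10, CX01])],
    [(158, [CZ12, CZ02, CZ01, Z2]), (258, [CX21, CX01]), (265, [K01, CZ02, CX02, K01, CZ01, CX20]), (231, [K12, S12, CX02, CX10, CX01])],
    [(111, []), (265, [CZ01, K01, CZ02, CX02, CX10, CX21]), (234, []), (230, [K12, S12, CX02, CX10, CX01])],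
    [(243, [CZ01, S02, CZ01, CX21, CX01]), (230, [K12, CX01, CX12]), (221, [CZ12, CZ02, CZ01, Z0]), (222, [S01, CX12, CX02])],
    [(242, [S02, CZ02, CX21, CX01, Z2]), (229, [K12, CX01, CX12]), (220, [CZ12, CZ02, CZ01, Z0]), (223, [S01, CX12, CX02])],
    [(166, [CZ02, Z2]), (227, [K12, S02, CX21, CX10]), (225, [CZ02, Z2]), (220, [S01, CX12, CX02])],
    [(116, []), (263, [CX20, K12, CX01]), (267, [CX02, CX10]), (221, [S01, CX12, CX02])],
    [(140, [S02, CX21, CX01]), (262, [CX20, K12, CX01]), (266, [CX02, CX10]), (225, [S01, CX12, CX02])],
    [(120, []), (226, [K12, S02, CX21, CX10]), (222, [CZ02, Z2]), (224, [S01, CX12, CX02])],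
    [(249, [K01, CX12, K01, X1]), (225, [K01, S02, CX21, CZ01]), (215, [S01, CX02, CX01]), (216, [S12, K01, S02, CZ02, CZ01])],
    [(248, [CZ12, Z2]), (222, [K01, S02, CX21, CZ01]), (214, [S01, CX02, CX01]), (217, [S12, K01, S02, CZ02, CZ01])],
    [(152, []), (267, [CX21, CX02, K01, CX21, CX12]), (207, []), (214, [S12, K01, S02, CZ02, CZ01])],
    [(126, []), (221, [K12, CX21, CZ01]), (259, [K12, S02, CZ02, CX21]), (215, [S12, K01, S02, CZ02, CZ01])],
    [(168, [K01, CX12, K01, X1]), (220, [K12, CX21, CZ01]), (257, [K12, S02, CZ02, CX21]), (219, [S12, K01, S02, CZ02, CZ01])],
    [(128, []), (266, [CX21, CX02, K01, CX21, CX12]), (204, []), (218, [S12, K01, S02, CZ02, CZ01])],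
    [(252, [K12, K01, S02, CZ02, Z2]), (261, [K01, CZ01, CX12, K01, S02, X2, X0]), (203, [CX02, CX10, CX01]), (234, [K12, K01, CX02, CZ12, CX20, CX10, CX02])],
    [(253, [CZ12, CZ02, CZ01, Z2]), (260, [K01, CZ01, CX12, K01, S02, X2, X0]), (202, [CX02, CX10, CX01]), (235, [K12, K01, CX02, CZ12, CX20, CX10, CX02])],
    [(163, []), (237, [K01, CZ02, CX01, CX20, CX10]), (219, []), (232, [K12, K01, CX02, CZ12, CX20, CX10, CX02])],
    [(133, []), (236, [K12, CZ02, CX21, CX12, X0, CX02]), (264, [K01, CZ02, CX02, K01, CZ01, CX20]), (233, [K12, K01, CX02, CZ12, CX20, CX10, CX02])],
    [(162, [K01, CX02, K01, X0]), (235, [K12, CZ02, CX21, CX12, X0, CX02]), (258, [K12, S12, CZ01, CX20, CX10, CX02]), (237, [K12, K01, CX02, CZ12, CX20, CX10, CX02])],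
    [(135, []), (234, [K01, CZ02, CX01, CX20, CX10]), (216, []), (236, [K12, K01, CX02, CZ12, CX20, CX10, CX02])],
    [(191, [K12, K01, CZ12, CZ02, CX21]), (151, [K12, CX12, CZ12, CX21]), (136, []), (239, [CX12])],
    [(190, [K12, K01, CZ12, CZ01, CX21]), (146, [CX20, K12, CZ12, CZ02, CZ01, Z2]), (171, [CX20, K12, CZ01, CX21, CX20]), (238, [CX12])],
    [(215, [CZ01, S02, CZ02, CZ01, Z0]), (184, [CX20, K12, S12, CX12, CZ12, CX02]), (162, [CX20, K12, CX02, K01, CZ12, CX02]), (249, [K12, CX02, CX10, CX01])],
    [(214, [S02, CZ02, Z0]), (178, [CX12, K01, CX02, CZ12, CX20, CX10, Z1]), (180, [K12, CX02, K01, X2]), (248, [CZ12, K12, CX02, CX10, CZ02, CX01, X2])],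
    [(221, [S02, CZ02, CX21, CX01, Z0]), (167, [K12, CX12, CZ12, CX02, CX21]), (140, []), (243, [S01, CX12, CX02])],
    [(220, [CX02, CX21, CZ12, CX20, CX02]), (172, [CX02, K01, CZ12, CX01, CZ01]), (183, [CX12, CZ02, CX21, CX10, CX02]), (242, [S01, CX12, CX02])],
    [(197, [K01, CZ02, CX02, K01, CZ01, CX20]), (251, [CX12, K01, S02, CX21, Z2, CX02]), (144, []), (251, [K12, S12])],
    [(196, [CX02, CZ12, CX10, CX02]), (245, [CX20, CZ01, CX12, K01, CZ01, CX12, CX20]), (174, [CX12, CX10, CZ02, Z2]), (250, [K12, S12])],
    [(202, [K01, CZ12, CX12, K01, CZ01, CX21]), (250, [CX02, K01, S12, CX12]), (177, [S01]), (247, [CZ12, K12, S12, X1])],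
    [(203, [CZ02, CZ01, CX02, CX01]), (247, [CX01, CZ12, CX20, K12, CZ12, CX20, CX01]), (168, [CZ01, K01, CX20, CX12, K01, X1]), (246, [K12, S12, CZ12, Z2])],
    [(227, [CZ12, Z2]), (181, [CX02, K01, CX10, CX21, CX12]), (149, []), (241, [CX02, CZ02, S01, K12, CZ12, CZ01, CX21])],
    [(226, [K01, CX12, K01, X1]), (165, [K12, CX02, X2, CX21, CZ01]), (161, [CX02, CX10, K12, S02, CX21]), (240, [S01, K12, CZ02, CZ01])],
    [(209, [CX12, K01, CX12, CX02, K01, CX02]), (246, [S12, K01, CZ12, CX02]), (155, []), (245, [K12, S12])],
    [(208, [K01, CX01, CX12, K01, X0, CX02]), (244, [K12, S02, CZ02, CX12, CX10, X0]), (189, [K01, CX02, K01, CX12, CX01, X1]), (244, [K12, S12])],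
    [(232, [K01, CX02, K01, CZ02, X0]), (252, [CZ01, Z2, CX12, K01, CZ01, CX12, Z1]), (186, [CZ12, K12, S12, S01, X0]), (253, [K12, K01, CX02, CZ02, CX20, CX10, CX02])],
    [(233, [CZ12, CZ02, CZ01, Z2]), (253, [K01, CZ01, K01, CX01, Z2, Z0]), (158, []), (252, [K01, CX02, K01, CX12, CX10, CZ02, X0])],
    [(180, [CX20, CX12, K01, S12, CX10, CX02, CX01]), (269, [K01, CZ01, K01, S02, CX02, CX10]), (206, [K01, S02, CZ01, CX02]), (256, [S01, CX12, CX02])],
    [(185, [CX20, K12, CX12, CZ02, CX02]), (268, [K01, CZ01, K01, S02, CX02, CX10]), (205, [K01, S02, CZ01, CX02]), (257, [S01, CX12, CX02])],
    [(160, []), (216, [S02, CX21, CX01]), (217, [CX20, CX12, K01, S12, S01, CX02]), (254, [S01, CX12, CX02])],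
    [(186, [CX20, K12, CX12, CZ02, CX02]), (215, []), (230, [K01, S02, CZ01, CX02]), (255, [S01, CX12, CX02])],
    [(161, []), (218, [CX21, CX01]), (236, [CX20, CX12, K01, S12, S01, CX02]), (259, [S01, CX12, CX02])],
    [(179, [CX20, CX12, K01, S12, CX10, CX02, CX01]), (214, []), (229, [K01, S02, CZ01, CX02]), (258, [S01, CX12, CX02])],
    [(171, [CX02, K01, CZ01, K01, CX21, CX20, X0, CX02]), (233, [K01, CZ01, CX12, K01, S02, X2, X0]), (194, [CX12, CZ02, CX20, K12, CZ02, X0]), (261, [CZ01, CX12, K01, CZ01, S02, X1, CX10])],
    [(170, [CX21, CX01]), (232, [K01, CZ01, CX12, K01, S02, X2, X0]), (193, [CX12, CZ02, CX20, K12, CZ02, X0]), (260, [CZ12, CX10, K12, S02, CZ01, CX12, X0])],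
    [(174, [K12, K01, CX02, CZ12, CX20, CX10, CX02]), (224, [K12, CZ01, CX20]), (200, [K01, CX02, K01, CZ02, X0]), (269, [S12, K01, S02])],
    [(173, [CX02, CZ12, CX10, CX02]), (223, [K12, CZ01, CX20]), (199, [K01, CX02, K01, CZ02, X0]), (268, [K12, S12, CX02, CZ12, CX10, CX02])],
    [(176, []), (217, [CX12, K01, CZ02, CX10, CZ01, CX20]), (235, [CZ01, K01, CX21, CX02, K01, X0]), (265, [CZ02, Z2])],
    [(177, []), (219, [CX21, CX10, CX02, K01, CX20, CZ01]), (218, [CZ01, K01, CX21, CX02, K01, X0]), (264, [CZ02, Z2])],
    [(183, [CZ02, CZ01]), (231, [CX12, K01, CZ12, CX02, CX21]), (224, [CX10, CX02]), (267, [CZ12, Z2, CX02, CX01])],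
    [(182, [CZ12, Z2]), (228, [CX12, K01, CZ12, CX02, CX21]), (223, [CX10, CX02]), (266, [CX02, CX01, CZ12, Z2])],
    [(189, [CX02, K01, CX12, CX02, K01, S01, CX02]), (255, [K01, CX01, CX12, K01, CX20, CX02]), (212, [CX10, CX01, X0]), (263, [CX12, CZ12, CX10, K12, S12, CX02])],
    [(188, [S01]), (254, [K01, CX01, CX12, K01, CX20, CX02]), (211, [CX10, CX01, X0]), (262, [K12, S12, S01])]]"

lemma generator_words_valid:
  "list_all (\<lambda>(c, w). set w \<subseteq> set generators \<and> same_action [c] w) generator_words"
  by code_simp

lemma generator_words_cover: "c \<in> set generators \<or> c \<in> fst ` set generator_words"
  by (cases c) (simp_all add: generators_def generator_words_def)

lemma coset_table_valid: "list_all2 coset_row_valid coset_reps coset_table"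
  by code_simp

lemma coset_reps_toffoli_count: "list_all (\<lambda>r. toffoli_count (map gate_of r) \<le> 4) coset_reps"
  by code_simp

lemma coset_reps_Nil: "[] \<in> set coset_reps"
  by (simp add: coset_reps_def)

lemma letter_eq_generator_word:
  "\<exists>u \<in> lists (set generators). word_sem (map gate_of [c]) = word_sem (map gate_of u)"
proof (cases "c \<in> set generators")
  case True
  then show ?thesis
    by (intro bexI[of _ "[c]"]) auto
next
  case False
  then obtain w where "(c, w) \<in> set generator_words"
    using generator_words_cover[of c] by force
  with generator_words_valid have "set w \<subseteq> set generators" "same_action [c] w"
    by (auto simp: list_all_iff)
  then show ?thesis
    by (intro bexI[of _ w] same_action_sound) auto
qed

lemma coset_table_closed:
  assumes "s \<in> set generators" "r \<in> set coset_reps"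
  shows "\<exists>r' \<in> set coset_reps. \<exists>h \<in> lists {c. \<not> is_toffoli (gate_of c)}.
    word_sem (map gate_of (s # r)) = word_sem (map gate_of (r' @ h))"
proof -
  from assms obtain i k where i: "i < length coset_reps" "r = coset_reps ! i"
    and k: "k < length generators" "s = generators ! k"
    by (auto simp: in_set_conv_nth)
  obtain j h where jh: "coset_table ! i ! k = (j, h)"
    by (cases "coset_table ! i ! k")
  from coset_table_valid i have "coset_row_valid r (coset_table ! i)"
    by (simp add: list_all2_conv_all_nth)
  with k jh have "j < length coset_reps" "list_all (\<lambda>c. \<not> is_toffoli (gate_of c)) h"
    and "same_action (s # r) (coset_reps ! j @ h)"
    by (force simp: coset_row_valid_def list_all2_conv_all_nth)+
  then show ?thesis
    by (intro bexI[of _ "coset_reps ! j"] bexI[of _ h] same_action_sound) (auto simp: list_all_iff)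
qed

lemma word_coset_decomposition:
  "\<exists>r \<in> set coset_reps. \<exists>h \<in> lists {c. \<not> is_toffoli (gate_of c)}.
    word_sem (map gate_of w) = word_sem (map gate_of (r @ h))"
  by (rule words_covered_by_coset_table[where G = "set generators"])
    (use letter_eq_generator_word coset_reps_Nil coset_table_closed in \<open>auto simp: word_sem_append\<close>)

theorem corollary1:
  assumes "set C \<subseteq> Sigma_D"
  shows "\<exists>C'. set C' \<subseteq> Sigma_D \<and> toffoli_count C' \<le> 120 \<and> word_sem C = word_sem C'"
proof -
  obtain w where C: "C = map gate_of w"
    using assms range_gate_of by (metis ex_map_conv image_iff subsetD)
  obtain r h where "r \<in> set coset_reps" and h: "h \<in> lists {c. \<not> is_toffoli (gate_of c)}"
    and eq: "word_sem C = word_sem (map gate_of (r @ h))"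
    using word_coset_decomposition[of w] C by blast
  have "toffoli_count (map gate_of (r @ h)) = toffoli_count (map gate_of r)"
    using h by (auto simp: toffoli_count_append toffoli_count_eq_0_iff)
  also have "\<dots> \<le> 4"
    using \<open>r \<in> set coset_reps\<close> coset_reps_toffoli_count by (simp add: list_all_iff)
  finally show ?thesis
    using eq range_gate_of by (intro exI[of _ "map gate_of (r @ h)"]) auto
qed

end
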